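(* Let $\mathcal E$ be an exchangeability system for a noncommutative probability space $(\mathcal A,\phi)$ and let $\mathcal B,\mathcal C\subseteq\mathcal A$ be subalgebras such that mixed cumulants vanish, i.e. for all $n$, all $X_1,\dots,X_n\in\mathcal B\cup\mathcal C$, every decomposition $[n]=I\sqcup J$ with $X_i\in\mathcal B$ for $i\in I$ and $X_j\in\mathcal C$ for $j\in J$, and every $\pi\in\Pi_n$ having a block that meets both $I$ and $J$, one has $K_\pi(X_1,\dots,X_n)=0$. Then $\mathcal B$ and $\mathcal C$ are $\mathcal E$-independent.
   Context: A noncommutative probability space is a pair $(\mathcal A,\phi)$ of a complex unital algebra $\mathcal A$ and a unital linear functional $\phi$. An exchangeability system $\mathcal E$ for $(\mathcal A,\phi)$ consists of a noncommutative probability space $(\mathcal U,\tilde\phi)$ and a family $(\iota_k)_{k\in\mathbb N}$ of embeddings (injective unital algebra homomorphisms) $\iota_k:\mathcal A\to\mathcal A_k\subseteq\mathcal U$ with $\tilde\phi\circ\iota_k=\phi$; write $X^{(k)}=\iota_k(X)$. It is required that for all $X_1,\dots,X_n\in\mathcal A$, all indices $i_1,\dots,i_n\in\mathbb N$ and every bijection $\sigma$ of $\mathbb N$, $\tilde\phi(X_1^{(i_1)}\cdots X_n^{(i_n)})=\tilde\phi(X_1^{(\sigma(i_1))}\cdots X_n^{(\sigma(i_n))})$; this value depends only on the kernel of $j\mapsto i_j$ and for a partition $\sigma$ of $[n]$ it is denoted $\phi_\sigma(X_1,\dots,X_n)$. $\Pi_n$ is the lattice of set partitions of $[n]$ ordered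 by refinement, with Möbius function $\mu$; $K_\pi(X_1,\dots,X_n)=\sum_{\sigma\le\pi}\phi_\sigma(X_1,\dots,X_n)\mu(\sigma,\pi)$. Subalgebras $\mathcal B,\mathcal C$ are $\mathcal E$-independent if for all $X_1,\dots,X_n\in\mathcal B\cup\mathcal C$ and every decomposition $[n]=I\sqcup J$ with $X_i\in\mathcal B$ for $i\in I$, $X_i\in\mathcal C$ for $i\in J$, one has $\phi_\pi(X_1,\dots,X_n)=\phi_{\pi'}(X_1,\dots,X_n)$ whenever $\pi,\pi'\in\Pi_n$ satisfy $\pi|_I=\pi'|_I$ and $\pi|_J=\pi'|_J$. *)

theory Defs
  imports Complex_Main "HOL-Library.Disjoint_Sets"
begin

definition complex_algebra :: "(complex \<Rightarrow> 'a::ring_1 \<Rightarrow> 'a) \<Rightarrow> bool" where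
  "complex_algebra sm \<longleftrightarrow>
     (\<forall>a b x. sm a (sm b x) = sm (a * b) x) \<and>
     (\<forall>x. sm 1 x = x) \<and>
     (\<forall>a b x. sm (a + b) x = sm a x + sm b x) \<and>
     (\<forall>a x y. sm a (x + y) = sm a x + sm a y) \<and>
     (\<forall>a x y. sm a (x * y) = sm a x * y \<and> sm a (x * y) = x * sm a y)"

definition nc_prob_space :: "(complex \<Rightarrow> 'a::ring_1 \<Rightarrow> 'a) \<Rightarrow> ('a \<Rightarrow> complex) \<Rightarrow> bool" where
  "nc_prob_space sm phi \<longleftrightarrow>
     complex_algebra sm \<and> phi 1 = 1 \<and>
     (\<forall>x y. phi (x + y) = phi x + phi y) \<and>
     (\<forall>c x. phi (sm c x) = c * phi x)"

definition alg_embedding ::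
  "(complex \<Rightarrow> 'a::ring_1 \<Rightarrow> 'a) \<Rightarrow> (complex \<Rightarrow> 'u::ring_1 \<Rightarrow> 'u) \<Rightarrow> ('a \<Rightarrow> 'u) \<Rightarrow> bool" where
  "alg_embedding smA smU f \<longleftrightarrow>
     inj f \<and> f 1 = 1 \<and>
     (\<forall>x y. f (x + y) = f x + f y) \<and>
     (\<forall>x y. f (x * y) = f x * f y) \<and>
     (\<forall>c x. f (smA c x) = smU c (f x))"

definition subalgebra :: "(complex \<Rightarrow> 'a::ring_1 \<Rightarrow> 'a) \<Rightarrow> 'a set \<Rightarrow> bool" where
  "subalgebra sm S \<longleftrightarrow>
     0 \<in> S \<and> (\<forall>x\<in>S. \<forall>y\<in>S. x + y \<in> S \<and> x * y \<in> S) \<and> (\<forall>c. \<forall>x\<in>S. sm c x \<in> S)"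

definition exch_prod :: "(nat \<Rightarrow> 'a \<Rightarrow> 'u::ring_1) \<Rightarrow> nat list \<Rightarrow> 'a list \<Rightarrow> 'u" where
  "exch_prod \<iota> is Xs = prod_list (map2 (\<lambda>i X. \<iota> i X) is Xs)"

definition exchangeability_system ::
  "(complex \<Rightarrow> 'a::ring_1 \<Rightarrow> 'a) \<Rightarrow> ('a \<Rightarrow> complex) \<Rightarrow>
   (complex \<Rightarrow> 'u::ring_1 \<Rightarrow> 'u) \<Rightarrow> ('u \<Rightarrow> complex) \<Rightarrow> (nat \<Rightarrow> 'a \<Rightarrow> 'u) \<Rightarrow> bool" where
  "exchangeability_system smA phi smU phiU \<iota> \<longleftrightarrow>
     nc_prob_space smU phiU \<and>
     (\<forall>k. alg_embedding smA smU (\<iota> k) \<and> (\<forall>X. phiU (\<iota> k X) = phi X)) \<and>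
     (\<forall>Xs is \<sigma>. length is = length Xs \<longrightarrow> bij \<sigma> \<longrightarrow>
        phiU (exch_prod \<iota> is Xs) = phiU (exch_prod \<iota> (map \<sigma> is) Xs))"

definition set_partitions :: "nat \<Rightarrow> nat set set set" where
  "set_partitions n = {P. partition_on {..<n} P}"

definition refines :: "nat set set \<Rightarrow> nat set set \<Rightarrow> bool" where
  "refines \<sigma> \<pi> \<longleftrightarrow> (\<forall>b\<in>\<sigma>. \<exists>c\<in>\<pi>. b \<subseteq> c)"

definition mobius :: "nat \<Rightarrow> nat set set \<Rightarrow> nat set set \<Rightarrow> int" where
  "mobius n = (THE \<mu>.
     (\<forall>x y. \<mu> x y \<noteq> 0 \<longrightarrow> x \<in> set_partitions n \<and> y \<in> set_partitions n \<and> refines x y) \<and>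
     (\<forall>x\<in>set_partitions n. \<forall>y\<in>set_partitions n. refines x y \<longrightarrow>
        (\<Sum>z\<in>{z\<in>set_partitions n. refines x z \<and> refines z y}. \<mu> x z) = (if x = y then 1 else 0)))"

text \<open>Canonical index function with kernel pi: j \<mapsto> least element of its block.\<close>
definition block_min :: "nat set set \<Rightarrow> nat \<Rightarrow> nat" where
  "block_min \<pi> j = Min {i. \<exists>b\<in>\<pi>. i \<in> b \<and> j \<in> b}"

text \<open>phi_pi(X_1,...,X_n) = phiU(X_1^(i_1)...X_n^(i_n)) for any i with kernel pi.\<close>
definition phi_part ::
  "(nat \<Rightarrow> 'a \<Rightarrow> 'u::ring_1) \<Rightarrow> ('u \<Rightarrow> complex) \<Rightarrow> nat set set \<Rightarrow> 'a list \<Rightarrow> complex" where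
  "phi_part \<iota> phiU \<pi> Xs = phiU (exch_prod \<iota> (map (block_min \<pi>) [0..<length Xs]) Xs)"

definition cumulant ::
  "(nat \<Rightarrow> 'a \<Rightarrow> 'u::ring_1) \<Rightarrow> ('u \<Rightarrow> complex) \<Rightarrow> nat set set \<Rightarrow> 'a list \<Rightarrow> complex" where
  "cumulant \<iota> phiU \<pi> Xs =
     (\<Sum>\<sigma>\<in>{\<sigma>\<in>set_partitions (length Xs). refines \<sigma> \<pi>}.
        phi_part \<iota> phiU \<sigma> Xs * of_int (mobius (length Xs) \<sigma> \<pi>))"

definition restrict_part :: "nat set set \<Rightarrow> nat set \<Rightarrow> nat set set" where
  "restrict_part \<pi> I = ((\<lambda>b. b \<inter> I) ` \<pi>) - {{}}"

definition E_independent ::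
  "(nat \<Rightarrow> 'a \<Rightarrow> 'u::ring_1) \<Rightarrow> ('u \<Rightarrow> complex) \<Rightarrow> 'a set \<Rightarrow> 'a set \<Rightarrow> bool" where
  "E_independent \<iota> phiU B C \<longleftrightarrow>
     (\<forall>Xs I J. set Xs \<subseteq> B \<union> C \<longrightarrow> I \<union> J = {..<length Xs} \<longrightarrow> I \<inter> J = {} \<longrightarrow>
        (\<forall>i\<in>I. Xs ! i \<in> B) \<longrightarrow> (\<forall>j\<in>J. Xs ! j \<in> C) \<longrightarrow>
        (\<forall>\<pi>\<in>set_partitions (length Xs). \<forall>\<pi>'\<in>set_partitions (length Xs).
           restrict_part \<pi> I = restrict_part \<pi>' I \<longrightarrow> restrict_part \<pi> J = restrict_part \<pi>' J \<longrightarrow>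
           phi_part \<iota> phiU \<pi> Xs = phi_part \<iota> phiU \<pi>' Xs))"

end

theory Submission
  imports Defs
begin

text \<open>Moebius inversion on \<open>\<Pi>\<^sub>n\<close> writes \<open>\<phi>\<^sub>\<pi>\<close> as the sum of the cumulants \<open>K\<^sub>\<sigma>\<close> over
  all \<open>\<sigma> \<le> \<pi>\<close>. By hypothesis only those \<open>\<sigma>\<close> contribute none of whose blocks meets both \<open>I\<close>
  and \<open>J\<close>; such a \<open>\<sigma>\<close> lies below \<open>\<pi>\<close> iff each of its blocks lies in a block of \<open>\<pi>|\<^sub>I\<close>
  or of \<open>\<pi>|\<^sub>J\<close>, a condition depending only on these two restrictions. Hence \<open>\<phi>\<^sub>\<pi> = \<phi>\<^sub>\<pi>'\<close>.\<close>

lemma finite_set_partitions: "finite (set_partitions n)"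
proof (rule finite_subset)
  show "set_partitions n \<subseteq> Pow (Pow {..<n})"
    unfolding set_partitions_def using partition_onD1 by fastforce
qed simp

lemma refines_refl: "refines x x"
  unfolding refines_def by blast

lemma refines_trans: "refines x y \<Longrightarrow> refines y z \<Longrightarrow> refines x z"
  unfolding refines_def by (meson order_trans)

lemma refines_mutual_subset:
  assumes x: "x \<in> set_partitions n" and "refines x y" "refines y x"
  shows "x \<subseteq> y"
proof
  fix b assume b: "b \<in> x"
  obtain c where c: "c \<in> y" "b \<subseteq> c" using \<open>refines x y\<close> b unfolding refines_def by blast
  obtain d where d: "d \<in> x" "c \<subseteq> d" using \<open>refines y x\<close> c unfolding refines_def by blast
  have "b \<noteq> {}" using b x partition_onD3 unfolding set_partitions_def by blast
  with c d have "b \<inter> d \<noteq> {}" by blast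
  then have "b = d" using b d x partition_onD2 unfolding set_partitions_def disjoint_def by blast
  with c d show "b \<in> y" by auto
qed

lemma refines_antisym:
  "x \<in> set_partitions n \<Longrightarrow> y \<in> set_partitions n \<Longrightarrow> refines x y \<Longrightarrow> refines y x \<Longrightarrow> x = y"
  using refines_mutual_subset by blast

lemma card_refinements_less:
  assumes "x \<in> set_partitions n" "y \<in> set_partitions n" "refines x y" "x \<noteq> y"
  shows "card {w \<in> set_partitions n. refines w x} < card {w \<in> set_partitions n. refines w y}"
proof (rule psubset_card_mono)
  show "finite {w \<in> set_partitions n. refines w y}" using finite_set_partitions by simp
  show "{w \<in> set_partitions n. refines w x} \<subset> {w \<in> set_partitions n. refines w y}"
    using assms refines_trans refines_refl refines_antisym by blast
qed

definition is_mobius :: "nat \<Rightarrow> (nat set set \<Rightarrow> nat set set \<Rightarrow> int) \<Rightarrow> bool" where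
  "is_mobius n \<mu> \<longleftrightarrow>
     (\<forall>x y. \<mu> x y \<noteq> 0 \<longrightarrow> x \<in> set_partitions n \<and> y \<in> set_partitions n \<and> refines x y) \<and>
     (\<forall>x\<in>set_partitions n. \<forall>y\<in>set_partitions n. refines x y \<longrightarrow>
        (\<Sum>z\<in>{z\<in>set_partitions n. refines x z \<and> refines z y}. \<mu> x z) = (if x = y then 1 else 0))"

lemma mobius_eq_The_is_mobius: "mobius n = (THE \<mu>. is_mobius n \<mu>)"
  unfolding mobius_def is_mobius_def ..

function mobius_rec :: "nat \<Rightarrow> nat set set \<Rightarrow> nat set set \<Rightarrow> int" where
  "mobius_rec n x y =
     (if x \<in> set_partitions n \<and> y \<in> set_partitions n \<and> refines x y then
        (if x = y then 1
         else - (\<Sum>z\<in>{z\<in>set_partitions n. refines x z \<and> refines z y \<and> z \<noteq> y}. mobius_rec n x z))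
      else 0)"
  by pat_completeness auto
termination
  by (relation "measure (\<lambda>(n, x, y). card {w \<in> set_partitions n. refines w y})")
    (auto intro: card_refinements_less)

declare mobius_rec.simps [simp del]

lemma sum_interval_split_top:
  fixes \<mu> :: "nat set set \<Rightarrow> int"
  assumes "y \<in> set_partitions n" "refines x y"
  shows "(\<Sum>z\<in>{z\<in>set_partitions n. refines x z \<and> refines z y}. \<mu> z)
       = \<mu> y + (\<Sum>z\<in>{z\<in>set_partitions n. refines x z \<and> refines z y \<and> z \<noteq> y}. \<mu> z)"
proof -
  have "{z\<in>set_partitions n. refines x z \<and> refines z y \<and> z \<noteq> y}
      = {z\<in>set_partitions n. refines x z \<and> refines z y} - {y}" by blast
  then show ?thesis
    using assms finite_set_partitions refines_refl by (simp add: sum.remove)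
qed

lemma mobius_rec_recursion:
  assumes "x \<in> set_partitions n" "y \<in> set_partitions n" "refines x y"
  shows "mobius_rec n x y = (if x = y then 1 else 0)
           - (\<Sum>z\<in>{z\<in>set_partitions n. refines x z \<and> refines z y \<and> z \<noteq> y}. mobius_rec n x z)"
proof (cases "x = y")
  case True
  then have "{z\<in>set_partitions n. refines y z \<and> refines z y \<and> z \<noteq> y} = {}"
    using assms refines_antisym by blast
  then have below: "(\<Sum>z\<in>{z\<in>set_partitions n. refines y z \<and> refines z y \<and> z \<noteq> y}. mobius_rec n y z) = 0"
    by (simp only: sum.empty)
  from True assms show ?thesis
    by (subst mobius_rec.simps) (simp add: below)
next
  case False
  with assms show ?thesis
    by (subst mobius_rec.simps) simp
qed

lemma is_mobius_mobius_rec: "is_mobius n (mobius_rec n)"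
  unfolding is_mobius_def
proof (rule conjI; intro allI impI ballI)
  fix x y assume "mobius_rec n x y \<noteq> 0"
  then show "x \<in> set_partitions n \<and> y \<in> set_partitions n \<and> refines x y"
    by (subst (asm) mobius_rec.simps) (auto split: if_splits)
next
  fix x y assume xy: "x \<in> set_partitions n" "y \<in> set_partitions n" "refines x y"
  then show "(\<Sum>z\<in>{z\<in>set_partitions n. refines x z \<and> refines z y}. mobius_rec n x z)
        = (if x = y then 1 else 0)"
    using mobius_rec_recursion[OF xy] sum_interval_split_top[OF xy(2,3), of "mobius_rec n x"] by simp
qed

lemma is_mobius_recursion:
  assumes "is_mobius n \<mu>" "x \<in> set_partitions n" "y \<in> set_partitions n" "refines x y"
  shows "\<mu> x y = (if x = y then 1 else 0)
           - (\<Sum>z\<in>{z\<in>set_partitions n. refines x z \<and> refines z y \<and> z \<noteq> y}. \<mu> x z)"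
proof -
  have "(\<Sum>z\<in>{z\<in>set_partitions n. refines x z \<and> refines z y}. \<mu> x z) = (if x = y then 1 else 0)"
    using assms unfolding is_mobius_def by blast
  then show ?thesis
    using sum_interval_split_top[OF assms(3,4), of "\<mu> x"] by simp
qed

lemma is_mobius_unique:
  assumes "is_mobius n \<mu>"
  shows "\<mu> x y = mobius_rec n x y"
proof (induction y arbitrary: x rule: measure_induct_rule[of "\<lambda>y. card {w \<in> set_partitions n. refines w y}"])
  case (less y)
  show ?case
  proof (cases "x \<in> set_partitions n \<and> y \<in> set_partitions n \<and> refines x y")
    case False
    then have "\<mu> x y = 0" and "mobius_rec n x y = 0"
      using assms is_mobius_mobius_rec[of n] unfolding is_mobius_def by blast+
    then show ?thesis by simp
  next
    case True
    let ?below = "{z\<in>set_partitions n. refines x z \<and> refines z y \<and> z \<noteq> y}"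
    have "(\<Sum>z\<in>?below. \<mu> x z) = (\<Sum>z\<in>?below. mobius_rec n x z)"
      using less True card_refinements_less by (intro sum.cong) blast+
    then show ?thesis
      using True is_mobius_recursion[OF assms] mobius_rec_recursion by simp
  qed
qed

lemma is_mobius_mobius: "is_mobius n (mobius n)"
proof -
  have "(THE \<mu>. is_mobius n \<mu>) = mobius_rec n"
    using is_mobius_mobius_rec is_mobius_unique by (intro the_equality) blast+
  then show ?thesis
    using is_mobius_mobius_rec by (simp add: mobius_eq_The_is_mobius)
qed

lemma sum_mobius_interval:
  assumes "x \<in> set_partitions n" "y \<in> set_partitions n"
  shows "(\<Sum>z\<in>{z\<in>set_partitions n. refines x z \<and> refines z y}. mobius n x z) = (if x = y then 1 else 0)"
proof (cases "refines x y")
  case True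
  with assms is_mobius_mobius show ?thesis unfolding is_mobius_def by blast
next
  case False
  then have "{z\<in>set_partitions n. refines x z \<and> refines z y} = {}" and "x \<noteq> y"
    using refines_trans refines_refl by blast+
  then show ?thesis by (simp only: sum.empty if_False)
qed

lemma mobius_inversion:
  fixes f :: "nat set set \<Rightarrow> 'b::comm_ring_1"
  assumes \<pi>: "\<pi> \<in> set_partitions n"
  shows "(\<Sum>\<sigma>\<in>{\<sigma>\<in>set_partitions n. refines \<sigma> \<pi>}.
            \<Sum>\<tau>\<in>{\<tau>\<in>set_partitions n. refines \<tau> \<sigma>}. f \<tau> * of_int (mobius n \<tau> \<sigma>)) = f \<pi>"
proof -
  have fin: "finite (set_partitions n)" by (rule finite_set_partitions)
  have "(\<Sum>\<sigma>\<in>{\<sigma>\<in>set_partitions n. refines \<sigma> \<pi>}.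
            \<Sum>\<tau>\<in>{\<tau>\<in>set_partitions n. refines \<tau> \<sigma>}. f \<tau> * of_int (mobius n \<tau> \<sigma>))
      = (\<Sum>\<tau>\<in>set_partitions n.
            f \<tau> * of_int (\<Sum>\<sigma>\<in>{\<sigma>\<in>set_partitions n. refines \<tau> \<sigma> \<and> refines \<sigma> \<pi>}. mobius n \<tau> \<sigma>))"
    using fin by (subst sum.swap_restrict) (simp_all add: sum_distrib_left conj_ac)
  also have "\<dots> = (\<Sum>\<tau>\<in>set_partitions n. if \<tau> = \<pi> then f \<tau> else 0)"
    using \<pi> by (intro sum.cong) (simp_all add: sum_mobius_interval)
  also have "\<dots> = f \<pi>"
    using fin \<pi> by simp
  finally show ?thesis .
qed

lemma phi_part_eq_sum_cumulant:
  assumes "\<pi> \<in> set_partitions (length Xs)"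
  shows "phi_part \<iota> phiU \<pi> Xs = (\<Sum>\<sigma>\<in>{\<sigma>\<in>set_partitions (length Xs). refines \<sigma> \<pi>}. cumulant \<iota> phiU \<sigma> Xs)"
  unfolding cumulant_def using mobius_inversion[OF assms, of "\<lambda>\<tau>. phi_part \<iota> phiU \<tau> Xs"] by simp

definition has_mixed_block :: "nat set set \<Rightarrow> nat set \<Rightarrow> nat set \<Rightarrow> bool" where
  "has_mixed_block \<pi> I J \<longleftrightarrow> (\<exists>b\<in>\<pi>. b \<inter> I \<noteq> {} \<and> b \<inter> J \<noteq> {})"

lemma block_subset_if_restrict_part_eq:
  assumes "restrict_part \<pi> I = restrict_part \<pi>' I"
    and "c \<in> \<pi>" "b \<subseteq> c" "b \<subseteq> I" "b \<noteq> {}"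
  shows "\<exists>c'\<in>\<pi>'. b \<subseteq> c'"
proof -
  have "c \<inter> I \<in> restrict_part \<pi> I"
    using assms(2-5) unfolding restrict_part_def by blast
  then have "c \<inter> I \<in> restrict_part \<pi>' I"
    using assms(1) by simp
  then obtain c' where "c' \<in> \<pi>'" "c \<inter> I = c' \<inter> I"
    unfolding restrict_part_def by blast
  with assms show ?thesis by blast
qed

lemma refines_if_restrict_parts_eq:
  assumes \<sigma>: "\<sigma> \<in> set_partitions n" and IJ: "I \<union> J = {..<n}"
    and unmixed: "\<not> has_mixed_block \<sigma> I J"
    and restr_I: "restrict_part \<pi> I = restrict_part \<pi>' I"
    and restr_J: "restrict_part \<pi> J = restrict_part \<pi>' J"
    and "refines \<sigma> \<pi>"
  shows "refines \<sigma> \<pi>'"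
  unfolding refines_def
proof
  fix b assume b: "b \<in> \<sigma>"
  obtain c where c: "c \<in> \<pi>" "b \<subseteq> c"
    using \<open>refines \<sigma> \<pi>\<close> b unfolding refines_def by blast
  have "b \<noteq> {}" "b \<subseteq> {..<n}"
    using b \<sigma> partition_onD1 partition_onD3 unfolding set_partitions_def by blast+
  moreover from this have "b \<subseteq> I \<or> b \<subseteq> J"
    using unmixed b IJ unfolding has_mixed_block_def by blast
  ultimately show "\<exists>c'\<in>\<pi>'. b \<subseteq> c'"
    using block_subset_if_restrict_part_eq[OF restr_I c] block_subset_if_restrict_part_eq[OF restr_J c]
    by blast
qed

lemma phi_part_eq_sum_unmixed_cumulant:
  assumes "\<pi> \<in> set_partitions (length Xs)"
    and vanish: "\<And>\<sigma>. \<sigma> \<in> set_partitions (length Xs) \<Longrightarrow> has_mixed_block \<sigma> I J \<Longrightarrow>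
                  cumulant \<iota> phiU \<sigma> Xs = 0"
  shows "phi_part \<iota> phiU \<pi> Xs =
    (\<Sum>\<sigma>\<in>{\<sigma>\<in>set_partitions (length Xs). refines \<sigma> \<pi> \<and> \<not> has_mixed_block \<sigma> I J}.
       cumulant \<iota> phiU \<sigma> Xs)"
  unfolding phi_part_eq_sum_cumulant[OF assms(1)]
  using finite_set_partitions vanish by (intro sum.mono_neutral_right) auto

theorem proposition2p10:
  fixes smA :: "complex \<Rightarrow> 'a::ring_1 \<Rightarrow> 'a" and phi :: "'a \<Rightarrow> complex"
    and smU :: "complex \<Rightarrow> 'u::ring_1 \<Rightarrow> 'u" and phiU :: "'u \<Rightarrow> complex"
    and \<iota> :: "nat \<Rightarrow> 'a \<Rightarrow> 'u" and B C :: "'a set"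
  assumes "nc_prob_space smA phi"
    and "exchangeability_system smA phi smU phiU \<iota>"
    and "subalgebra smA B" and "subalgebra smA C"
    and vanish: "\<And>Xs I J \<pi>. set Xs \<subseteq> B \<union> C \<Longrightarrow> I \<union> J = {..<length Xs} \<Longrightarrow> I \<inter> J = {} \<Longrightarrow>
        (\<forall>i\<in>I. Xs ! i \<in> B) \<Longrightarrow> (\<forall>j\<in>J. Xs ! j \<in> C) \<Longrightarrow>
        \<pi> \<in> set_partitions (length Xs) \<Longrightarrow> (\<exists>b\<in>\<pi>. b \<inter> I \<noteq> {} \<and> b \<inter> J \<noteq> {}) \<Longrightarrow>
        cumulant \<iota> phiU \<pi> Xs = 0"
  shows "E_independent \<iota> phiU B C"
  unfolding E_independent_def
proof (intro allI impI ballI)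
  fix Xs :: "'a list" and I J :: "nat set" and \<pi> \<pi>'
  assume Xs: "set Xs \<subseteq> B \<union> C" and IJ: "I \<union> J = {..<length Xs}" "I \<inter> J = {}"
    and in_B: "\<forall>i\<in>I. Xs ! i \<in> B" and in_C: "\<forall>j\<in>J. Xs ! j \<in> C"
    and \<pi>: "\<pi> \<in> set_partitions (length Xs)" and \<pi>': "\<pi>' \<in> set_partitions (length Xs)"
    and restr: "restrict_part \<pi> I = restrict_part \<pi>' I" "restrict_part \<pi> J = restrict_part \<pi>' J"
  note mixed_cumulants_vanish = vanish[OF Xs IJ in_B in_C, folded has_mixed_block_def]
  have "{\<sigma>\<in>set_partitions (length Xs). refines \<sigma> \<pi> \<and> \<not> has_mixed_block \<sigma> I J}
      = {\<sigma>\<in>set_partitions (length Xs). refines \<sigma> \<pi>' \<and> \<not> has_mixed_block \<sigma> I J}"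
    using refines_if_restrict_parts_eq[OF _ IJ(1) _ restr]
      refines_if_restrict_parts_eq[OF _ IJ(1) _ restr[symmetric]] by blast
  then show "phi_part \<iota> phiU \<pi> Xs = phi_part \<iota> phiU \<pi>' Xs"
    using phi_part_eq_sum_unmixed_cumulant[OF \<pi> mixed_cumulants_vanish]
      phi_part_eq_sum_unmixed_cumulant[OF \<pi>' mixed_cumulants_vanish] by simp
qed

end
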